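(* Under the hypotheses of the subprime lemma (as in the context), define $x\sim y$ for $x,y\in V$ iff $R_{xy}$ is the graph of an isomorphism from $\mathbb A_x$ to $\mathbb A_y$. If $x\in V$ is such that $|A_x|\ge 2$ and $|A_x|$ is maximal among all $|A_z|$, $z\in V$, then there exists $y\in V$ with $y\ne x$ and $x\sim y$.
   Context: $\mathbf A$ is a finite relational structure with a majority polymorphism and a Maltsev polymorphism, $\mathcal A=\mathcal V(\mathrm{Alg}(\mathbf A))$ (the variety generated by the algebra of all polymorphisms of $\mathbf A$). $\mathcal I=(V,\{\mathbb A_x\}_{x\in V},\{R_{xy}\}_{(x,y)\in V^2},w)$ with $|V|>1$: each $\mathbb A_x\in\mathcal A$ finite with universe $A_x$; each $R_{xy}$ the universe of a subalgebra of $\mathbb A_x\times\mathbb A_y$, $R_{xx}$ the equality relation, $R_{yx}=R_{xy}^{-1}$, and for $x\ne y$, $R_{xy}$ has both projections onto. For $x\ne y$, $\theta_{xy}=\{(a,a')\in A_x^2\mid\exists b:(a,b),(a',b)\in R_{xy}\}$, $\mu_x=\bigwedge_{y\ne x}\theta_{xy}$, and $\mathbb A_x$ is prime if $\mu_x$ is the equality relation. Every domain either has one element or is subdirectly irreducible (the intersection of its non-equality congruences is not the equality relation) and prime. *)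

theory Defs
  imports Main
begin

definition rel_structure :: "'a set \<Rightarrow> (nat \<times> 'a list set) set \<Rightarrow> bool" where
  "rel_structure A Rels \<longleftrightarrow> A \<noteq> {} \<and>
     (\<forall>(k, S) \<in> Rels. \<forall>t \<in> S. length t = k \<and> set t \<subseteq> A)"

definition finite_rel_structure :: "'a set \<Rightarrow> (nat \<times> 'a list set) set \<Rightarrow> bool" where
  "finite_rel_structure A Rels \<longleftrightarrow> rel_structure A Rels \<and> finite A \<and> finite Rels"

definition polymorphism :: "'a set \<Rightarrow> (nat \<times> 'a list set) set \<Rightarrow> nat \<Rightarrow> ('a list \<Rightarrow> 'a) \<Rightarrow> bool" where
  "polymorphism A Rels n f \<longleftrightarrow>
     (\<forall>xs. length xs = n \<and> set xs \<subseteq> A \<longrightarrow> f xs \<in> A) \<and>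
     (\<forall>(k, S) \<in> Rels. \<forall>ts. length ts = n \<and> set ts \<subseteq> S \<longrightarrow>
        map (\<lambda>j. f (map (\<lambda>t. t ! j) ts)) [0..<k] \<in> S)"

definition majority_polymorphism :: "'a set \<Rightarrow> (nat \<times> 'a list set) set \<Rightarrow> ('a list \<Rightarrow> 'a) \<Rightarrow> bool" where
  "majority_polymorphism A Rels f \<longleftrightarrow> polymorphism A Rels 3 f \<and>
     (\<forall>a\<in>A. \<forall>b\<in>A. f [a, a, b] = a \<and> f [a, b, a] = a \<and> f [b, a, a] = a)"

definition maltsev_polymorphism :: "'a set \<Rightarrow> (nat \<times> 'a list set) set \<Rightarrow> ('a list \<Rightarrow> 'a) \<Rightarrow> bool" where
  "maltsev_polymorphism A Rels m \<longleftrightarrow> polymorphism A Rels 3 m \<and>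
     (\<forall>a\<in>A. \<forall>b\<in>A. m [a, b, b] = a \<and> m [b, b, a] = a)"

text \<open>Operation symbols of Alg(A): pairs (arity, polymorphism).\<close>
type_synonym 'a sym = "nat \<times> ('a list \<Rightarrow> 'a)"

definition poly_sig :: "'a set \<Rightarrow> (nat \<times> 'a list set) set \<Rightarrow> 'a sym set" where
  "poly_sig A Rels = {(n, f). polymorphism A Rels n f}"

datatype 'f trm = Var nat | App 'f "'f trm list"

fun eval_trm :: "('f \<Rightarrow> 'b list \<Rightarrow> 'b) \<Rightarrow> (nat \<Rightarrow> 'b) \<Rightarrow> 'f trm \<Rightarrow> 'b" where
  "eval_trm I s (Var i) = s i"
| "eval_trm I s (App f ts) = I f (map (eval_trm I s) ts)"

fun wf_trm :: "('a sym) set \<Rightarrow> 'a sym trm \<Rightarrow> bool" where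
  "wf_trm Sig (Var i) = True"
| "wf_trm Sig (App f ts) = (f \<in> Sig \<and> length ts = fst f \<and> (\<forall>t \<in> set ts. wf_trm Sig t))"

definition poly_ops :: "'a sym \<Rightarrow> 'a list \<Rightarrow> 'a" where
  "poly_ops = (\<lambda>(n, f) xs. f xs)"

definition holds_in :: "'b set \<Rightarrow> ('f \<Rightarrow> 'b list \<Rightarrow> 'b) \<Rightarrow> 'f trm \<Rightarrow> 'f trm \<Rightarrow> bool" where
  "holds_in B ops l r \<longleftrightarrow> (\<forall>s. (\<forall>i. s i \<in> B) \<longrightarrow> eval_trm ops s l = eval_trm ops s r)"

definition is_algebra :: "'a set \<Rightarrow> (nat \<times> 'a list set) set \<Rightarrow> 'b set \<Rightarrow> ('a sym \<Rightarrow> 'b list \<Rightarrow> 'b) \<Rightarrow> bool" where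
  "is_algebra A Rels B ops \<longleftrightarrow> B \<noteq> {} \<and>
     (\<forall>(n, f) \<in> poly_sig A Rels. \<forall>xs. length xs = n \<and> set xs \<subseteq> B \<longrightarrow> ops (n, f) xs \<in> B)"

text \<open>Membership in the variety V(Alg(A)) generated by Alg(A): the class of
  algebras of the same signature satisfying every identity of Alg(A)
  (equivalently, by Birkhoff, HSP(Alg(A))).\<close>
definition in_variety :: "'a set \<Rightarrow> (nat \<times> 'a list set) set \<Rightarrow> 'b set \<Rightarrow> ('a sym \<Rightarrow> 'b list \<Rightarrow> 'b) \<Rightarrow> bool" where
  "in_variety A Rels B ops \<longleftrightarrow> is_algebra A Rels B ops \<and>
     (\<forall>l r. wf_trm (poly_sig A Rels) l \<and> wf_trm (poly_sig A Rels) r \<and>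
            holds_in A poly_ops l r \<longrightarrow> holds_in B ops l r)"

definition congruence :: "'a set \<Rightarrow> (nat \<times> 'a list set) set \<Rightarrow> 'b set \<Rightarrow> ('a sym \<Rightarrow> 'b list \<Rightarrow> 'b) \<Rightarrow> ('b \<times> 'b) set \<Rightarrow> bool" where
  "congruence A Rels B ops \<theta> \<longleftrightarrow> equiv B \<theta> \<and>
     (\<forall>(n, f) \<in> poly_sig A Rels. \<forall>xs ys. length xs = n \<and> length ys = n \<and>
        set xs \<subseteq> B \<and> set ys \<subseteq> B \<and> (\<forall>i<n. (xs ! i, ys ! i) \<in> \<theta>) \<longrightarrow>
        (ops (n, f) xs, ops (n, f) ys) \<in> \<theta>)"

definition subdirectly_irreducible :: "'a set \<Rightarrow> (nat \<times> 'a list set) set \<Rightarrow> 'b set \<Rightarrow> ('a sym \<Rightarrow> 'b list \<Rightarrow> 'b) \<Rightarrow> bool" where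
  "subdirectly_irreducible A Rels B ops \<longleftrightarrow>
     \<Inter> {\<theta>. congruence A Rels B ops \<theta> \<and> \<theta> \<noteq> Id_on B} \<noteq> Id_on B"

definition subalg_product :: "'a set \<Rightarrow> (nat \<times> 'a list set) set \<Rightarrow> 'b set \<Rightarrow> ('a sym \<Rightarrow> 'b list \<Rightarrow> 'b)
    \<Rightarrow> 'b set \<Rightarrow> ('a sym \<Rightarrow> 'b list \<Rightarrow> 'b) \<Rightarrow> ('b \<times> 'b) set \<Rightarrow> bool" where
  "subalg_product A Rels B1 ops1 B2 ops2 R \<longleftrightarrow> R \<subseteq> B1 \<times> B2 \<and>
     (\<forall>(n, f) \<in> poly_sig A Rels. \<forall>ps. length ps = n \<and> set ps \<subseteq> R \<longrightarrow>
        (ops1 (n, f) (map fst ps), ops2 (n, f) (map snd ps)) \<in> R)"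

definition is_isomorphism :: "'a set \<Rightarrow> (nat \<times> 'a list set) set \<Rightarrow> 'b set \<Rightarrow> ('a sym \<Rightarrow> 'b list \<Rightarrow> 'b)
    \<Rightarrow> 'b set \<Rightarrow> ('a sym \<Rightarrow> 'b list \<Rightarrow> 'b) \<Rightarrow> ('b \<Rightarrow> 'b) \<Rightarrow> bool" where
  "is_isomorphism A Rels B1 ops1 B2 ops2 h \<longleftrightarrow> bij_betw h B1 B2 \<and>
     (\<forall>(n, f) \<in> poly_sig A Rels. \<forall>xs. length xs = n \<and> set xs \<subseteq> B1 \<longrightarrow>
        h (ops1 (n, f) xs) = ops2 (n, f) (map h xs))"

definition theta_rel :: "'b set \<Rightarrow> ('b \<times> 'b) set \<Rightarrow> ('b \<times> 'b) set" where
  "theta_rel Bx Rxy = {(a, a'). a \<in> Bx \<and> a' \<in> Bx \<and> (\<exists>b. (a, b) \<in> Rxy \<and> (a', b) \<in> Rxy)}"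

definition mu_rel :: "'v set \<Rightarrow> ('v \<Rightarrow> 'b set) \<Rightarrow> ('v \<Rightarrow> 'v \<Rightarrow> ('b \<times> 'b) set) \<Rightarrow> 'v \<Rightarrow> ('b \<times> 'b) set" where
  "mu_rel V D R x = (\<Inter>y \<in> V - {x}. theta_rel (D x) (R x y))"

definition prime_dom :: "'v set \<Rightarrow> ('v \<Rightarrow> 'b set) \<Rightarrow> ('v \<Rightarrow> 'v \<Rightarrow> ('b \<times> 'b) set) \<Rightarrow> 'v \<Rightarrow> bool" where
  "prime_dom V D R x \<longleftrightarrow> mu_rel V D R x = Id_on (D x)"

text \<open>An instance (V, {A_x}, {R_xy}) over the variety V(Alg(A)), |V| > 1.
  (The weight function w plays no role in the statement and is omitted.)\<close>
definition csp_instance :: "'a set \<Rightarrow> (nat \<times> 'a list set) set \<Rightarrow> 'v set \<Rightarrow> ('v \<Rightarrow> 'b set)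
    \<Rightarrow> ('v \<Rightarrow> 'a sym \<Rightarrow> 'b list \<Rightarrow> 'b) \<Rightarrow> ('v \<Rightarrow> 'v \<Rightarrow> ('b \<times> 'b) set) \<Rightarrow> bool" where
  "csp_instance A Rels V D Op R \<longleftrightarrow>
     finite V \<and> card V > 1 \<and>
     (\<forall>x\<in>V. finite (D x) \<and> in_variety A Rels (D x) (Op x)) \<and>
     (\<forall>x\<in>V. \<forall>y\<in>V. subalg_product A Rels (D x) (Op x) (D y) (Op y) (R x y)) \<and>
     (\<forall>x\<in>V. R x x = Id_on (D x)) \<and>
     (\<forall>x\<in>V. \<forall>y\<in>V. R y x = (R x y)\<inverse>) \<and>
     (\<forall>x\<in>V. \<forall>y\<in>V. x \<noteq> y \<longrightarrow> fst ` R x y = D x \<and> snd ` R x y = D y)"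

definition iso_related :: "'a set \<Rightarrow> (nat \<times> 'a list set) set \<Rightarrow> ('v \<Rightarrow> 'b set)
    \<Rightarrow> ('v \<Rightarrow> 'a sym \<Rightarrow> 'b list \<Rightarrow> 'b) \<Rightarrow> ('v \<Rightarrow> 'v \<Rightarrow> ('b \<times> 'b) set) \<Rightarrow> 'v \<Rightarrow> 'v \<Rightarrow> bool" where
  "iso_related A Rels D Op R x y \<longleftrightarrow>
     (\<exists>h. is_isomorphism A Rels (D x) (Op x) (D y) (Op y) h \<and> R x y = {(a, h a) | a. a \<in> D x})"

end

theory Submission
  imports Defs
begin

text \<open>For y \<noteq> x the relation \<open>\<theta>_xy\<close> is a congruence of \<open>\<A>_x\<close>: it is compatible because
  \<open>R_xy\<close> is a subalgebra, and transitive because of the Maltsev term. Since \<open>\<A>_x\<close> is prime,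
  these congruences meet in the equality relation, so subdirect irreducibility forces some
  \<open>\<theta>_xy\<close> to be the equality relation itself. Then every element of \<open>A_y\<close> has a unique
  \<open>R_xy\<close>-partner in \<open>A_x\<close>, so \<open>|A_x| \<le> |A_y|\<close>; maximality of \<open>|A_x|\<close> makes this
  correspondence a bijection, and \<open>R_xy\<close> is the graph of an isomorphism.\<close>

lemma in_variety_maltsev_identities:
  assumes "in_variety A Rels B ops" "maltsev_polymorphism A Rels m" "a \<in> B" "b \<in> B"
  shows "ops (3, m) [a, b, b] = a" "ops (3, m) [b, b, a] = a"
proof -
  have m: "(3, m) \<in> poly_sig A Rels"
    using assms(2) by (simp add: poly_sig_def maltsev_polymorphism_def)
  have "holds_in A poly_ops (App (3, m) [Var 0, Var 1, Var 1]) (Var 0)"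
       "holds_in A poly_ops (App (3, m) [Var 1, Var 1, Var 0]) (Var 0)"
    using assms(2) by (simp_all add: holds_in_def poly_ops_def maltsev_polymorphism_def)
  then have identities: "holds_in B ops (App (3, m) [Var 0, Var 1, Var 1]) (Var 0)"
                        "holds_in B ops (App (3, m) [Var 1, Var 1, Var 0]) (Var 0)"
    using assms(1) m unfolding in_variety_def by simp_all
  define s where "s i = (if i = 0 then a else b)" for i :: nat
  have "\<forall>i. s i \<in> B" using assms(3,4) by (simp add: s_def)
  from identities[unfolded holds_in_def, THEN spec[of _ s], THEN mp, OF this]
  show "ops (3, m) [a, b, b] = a" "ops (3, m) [b, b, a] = a" by (simp_all add: s_def)
qed

lemma subalg_productD:
  assumes "subalg_product A Rels B1 ops1 B2 ops2 R" "(n, f) \<in> poly_sig A Rels"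
    and "length ps = n" "set ps \<subseteq> R"
  shows "(ops1 (n, f) (map fst ps), ops2 (n, f) (map snd ps)) \<in> R"
  using assms unfolding subalg_product_def by blast

lemma theta_rel_trans:
  assumes "in_variety A Rels B1 ops1" "in_variety A Rels B2 ops2"
    and "maltsev_polymorphism A Rels m"
    and "subalg_product A Rels B1 ops1 B2 ops2 R"
  shows "trans (theta_rel B1 R)"
proof (rule transI)
  fix a a' a''
  assume "(a, a') \<in> theta_rel B1 R" "(a', a'') \<in> theta_rel B1 R"
  then obtain b b' where in_R: "(a, b) \<in> R" "(a', b) \<in> R" "(a', b') \<in> R" "(a'', b') \<in> R"
    and in_B1: "a \<in> B1" "a' \<in> B1" "a'' \<in> B1"
    unfolding theta_rel_def by blast
  have in_B2: "b \<in> B2" "b' \<in> B2"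
    using in_R assms(4) unfolding subalg_product_def by auto
  have "(3, m) \<in> poly_sig A Rels"
    using assms(3) by (simp add: poly_sig_def maltsev_polymorphism_def)
  from subalg_productD[OF assms(4) this, of "[(a, b), (a', b), (a', b')]"]
  have "(ops1 (3, m) [a, a', a'], ops2 (3, m) [b, b, b']) \<in> R"
    using in_R by simp
  then have "(a, b') \<in> R"
    using in_variety_maltsev_identities[OF assms(1,3) in_B1(1,2)]
      in_variety_maltsev_identities[OF assms(2,3) in_B2(2,1)] by simp
  with in_R in_B1 show "(a, a'') \<in> theta_rel B1 R" unfolding theta_rel_def by blast
qed

lemma theta_rel_compatible:
  assumes "subalg_product A Rels B1 ops1 B2 ops2 R" "(n, f) \<in> poly_sig A Rels"
    and "length xs = n" "length ys = n" "\<forall>i<n. (xs ! i, ys ! i) \<in> theta_rel B1 R"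
  shows "(ops1 (n, f) xs, ops1 (n, f) ys) \<in> theta_rel B1 R"
proof -
  have "\<forall>i<n. \<exists>b. (xs ! i, b) \<in> R \<and> (ys ! i, b) \<in> R"
    using assms(5) unfolding theta_rel_def by blast
  then obtain c where c: "\<forall>i<n. (xs ! i, c i) \<in> R \<and> (ys ! i, c i) \<in> R"
    by metis
  define cs where "cs = map c [0..<n]"
  have "set (zip xs cs) \<subseteq> R" "set (zip ys cs) \<subseteq> R"
    using c assms(3,4) by (auto simp: cs_def set_zip)
  moreover have "length (zip xs cs) = n" "length (zip ys cs) = n"
    using assms(3,4) by (simp_all add: cs_def)
  ultimately have "(ops1 (n, f) xs, ops2 (n, f) cs) \<in> R" "(ops1 (n, f) ys, ops2 (n, f) cs) \<in> R"
    using subalg_productD[OF assms(1,2), of "zip xs cs"] subalg_productD[OF assms(1,2), of "zip ys cs"]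
      assms(3,4) by (simp_all add: cs_def)
  then show ?thesis
    using assms(1) unfolding theta_rel_def subalg_product_def by blast
qed

lemma congruence_theta_rel:
  assumes "in_variety A Rels B1 ops1" "in_variety A Rels B2 ops2"
    and "maltsev_polymorphism A Rels m"
    and "subalg_product A Rels B1 ops1 B2 ops2 R" "fst ` R = B1"
  shows "congruence A Rels B1 ops1 (theta_rel B1 R)"
proof -
  have "equiv B1 (theta_rel B1 R)"
  proof (rule equivI)
    show "theta_rel B1 R \<subseteq> B1 \<times> B1" unfolding theta_rel_def by blast
    show "refl_on B1 (theta_rel B1 R)"
      using assms(5) unfolding refl_on_def theta_rel_def by force
    show "sym (theta_rel B1 R)" unfolding sym_def theta_rel_def by blast
    show "trans (theta_rel B1 R)" using theta_rel_trans[OF assms(1-4)] .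
  qed
  then show ?thesis
    unfolding congruence_def using theta_rel_compatible[OF assms(4)] by blast
qed

lemma subdirectly_irreducible_INT_eq_Id_onD:
  assumes "subdirectly_irreducible A Rels B ops"
    and "\<forall>i\<in>I. congruence A Rels B ops (\<theta> i)" "(\<Inter>i\<in>I. \<theta> i) = Id_on B"
  shows "\<exists>i\<in>I. \<theta> i = Id_on B"
proof (rule ccontr)
  let ?S = "{\<theta>. congruence A Rels B ops \<theta> \<and> \<theta> \<noteq> Id_on B}"
  assume "\<not> ?thesis"
  with assms(2) have "\<theta> i \<in> ?S" if "i \<in> I" for i
    using that by blast
  then have "\<Inter>?S \<subseteq> Id_on B"
    unfolding assms(3)[symmetric] by (meson INT_greatest Inter_lower)
  moreover have "Id_on B \<subseteq> \<Inter>?S"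
  proof (rule Inter_greatest)
    fix \<theta> assume "\<theta> \<in> ?S"
    then have "refl_on B \<theta>" unfolding congruence_def equiv_def by blast
    then show "Id_on B \<subseteq> \<theta>" by (auto simp: refl_on_def)
  qed
  ultimately show False
    using assms(1) unfolding subdirectly_irreducible_def by blast
qed

lemma inj_on_snd_if_theta_rel_eq_Id_on:
  assumes "fst ` R \<subseteq> B" "theta_rel B R = Id_on B"
  shows "inj_on snd R"
proof (rule inj_onI)
  fix p q assume "p \<in> R" "q \<in> R" "snd p = snd q"
  then have "(fst p, fst q) \<in> theta_rel B R"
    using assms(1) unfolding theta_rel_def by (cases p, cases q) auto
  with assms(2) \<open>snd p = snd q\<close> show "p = q" by (auto simp: prod_eq_iff)
qed

lemma inj_on_fst_if_inj_on_snd: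
  assumes "inj_on snd R" "finite (snd ` R)" "card (snd ` R) \<le> card (fst ` R)"
  shows "inj_on fst R"
proof -
  have "finite R" using assms(1,2) finite_imageD by blast
  moreover have "card (fst ` R) = card R"
    using assms(3) card_image[OF assms(1)] card_image_le[OF \<open>finite R\<close>, of fst] by linarith
  ultimately show ?thesis using eq_card_imp_inj_on by blast
qed

lemma bij_graph_if_inj_on_fst_snd:
  assumes "inj_on fst R" "inj_on snd R"
  shows "\<exists>h. bij_betw h (fst ` R) (snd ` R) \<and> R = {(a, h a) | a. a \<in> fst ` R}"
proof (intro exI conjI)
  let ?g = "the_inv_into R fst"
  have g: "bij_betw ?g (fst ` R) R"
    using bij_betw_the_inv_into[OF inj_on_imp_bij_betw[OF assms(1)]] .
  then show "bij_betw (snd \<circ> ?g) (fst ` R) (snd ` R)"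
    using bij_betw_trans inj_on_imp_bij_betw[OF assms(2)] by blast
  have "?g (fst p) = p" if "p \<in> R" for p
    using the_inv_into_f_f[OF assms(1) that] .
  moreover have "fst (?g a) = a" if "a \<in> fst ` R" for a
    using f_the_inv_into_f[OF assms(1) that] .
  ultimately show "R = {(a, (snd \<circ> ?g) a) | a. a \<in> fst ` R}"
    using g unfolding bij_betw_def by (auto intro!: image_eqI simp: prod_eq_iff)
qed

lemma is_isomorphism_if_graph_subalg_product:
  assumes "bij_betw h B1 B2"
    and "subalg_product A Rels B1 ops1 B2 ops2 {(a, h a) | a. a \<in> B1}"
  shows "is_isomorphism A Rels B1 ops1 B2 ops2 h"
proof -
  have "h (ops1 (n, f) xs) = ops2 (n, f) (map h xs)"
    if "(n, f) \<in> poly_sig A Rels" "length xs = n" "set xs \<subseteq> B1" for n f xs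
  proof -
    have "set (map (\<lambda>a. (a, h a)) xs) \<subseteq> {(a, h a) | a. a \<in> B1}"
      using that(3) by auto
    from subalg_productD[OF assms(2) that(1) _ this]
    have "(ops1 (n, f) xs, ops2 (n, f) (map h xs)) \<in> {(a, h a) | a. a \<in> B1}"
      using that(2) by (simp add: comp_def)
    then show ?thesis by auto
  qed
  with assms(1) show ?thesis unfolding is_isomorphism_def by blast
qed

lemma csp_instanceD:
  assumes "csp_instance A Rels V D Op R" "x \<in> V"
  shows "finite (D x)" "in_variety A Rels (D x) (Op x)"
    and "y \<in> V \<Longrightarrow> subalg_product A Rels (D x) (Op x) (D y) (Op y) (R x y)"
    and "y \<in> V \<Longrightarrow> y \<noteq> x \<Longrightarrow> fst ` R x y = D x"
    and "y \<in> V \<Longrightarrow> y \<noteq> x \<Longrightarrow> snd ` R x y = D y"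
  using assms unfolding csp_instance_def by (elim conjE; metis)+

lemma congruence_theta_rel_csp_instance:
  assumes "csp_instance A Rels V D Op R" "maltsev_polymorphism A Rels m"
    and "x \<in> V" "y \<in> V" "y \<noteq> x"
  shows "congruence A Rels (D x) (Op x) (theta_rel (D x) (R x y))"
  using congruence_theta_rel[OF csp_instanceD(2)[OF assms(1,3)] csp_instanceD(2)[OF assms(1,4)]
      assms(2) csp_instanceD(3)[OF assms(1,3,4)] csp_instanceD(4)[OF assms(1,3,4,5)]] .

theorem mainTheorem8:
  fixes A :: "'a set" and Rels :: "(nat \<times> 'a list set) set"
    and V :: "'v set" and D :: "'v \<Rightarrow> 'b set"
    and Op :: "'v \<Rightarrow> 'a sym \<Rightarrow> 'b list \<Rightarrow> 'b"
    and R :: "'v \<Rightarrow> 'v \<Rightarrow> ('b \<times> 'b) set"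
    and x :: 'v
  assumes "finite_rel_structure A Rels"
    and "\<exists>f. majority_polymorphism A Rels f"
    and "\<exists>m. maltsev_polymorphism A Rels m"
    and "csp_instance A Rels V D Op R"
    and "\<forall>z\<in>V. card (D z) = 1 \<or>
           (subdirectly_irreducible A Rels (D z) (Op z) \<and> prime_dom V D R z)"
    and "x \<in> V" and "card (D x) \<ge> 2"
    and "\<forall>z\<in>V. card (D z) \<le> card (D x)"
  shows "\<exists>y\<in>V. y \<noteq> x \<and> iso_related A Rels D Op R x y"
proof -
  obtain m where m: "maltsev_polymorphism A Rels m" using assms(3) by blast
  have "card (D x) \<noteq> 1" using assms(7) by simp
  then have SI: "subdirectly_irreducible A Rels (D x) (Op x)" and prime: "prime_dom V D R x"
    using assms(5,6) by blast+
  have cong: "\<forall>y\<in>V - {x}. congruence A Rels (D x) (Op x) (theta_rel (D x) (R x y))"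
    using congruence_theta_rel_csp_instance[OF assms(4) m assms(6)] by blast
  obtain y where "y \<in> V - {x}" and theta_Id: "theta_rel (D x) (R x y) = Id_on (D x)"
    using subdirectly_irreducible_INT_eq_Id_onD[OF SI cong prime[unfolded prime_dom_def mu_rel_def]]
    by blast
  then have y: "y \<in> V" "y \<noteq> x" by auto
  note inst = csp_instanceD[OF assms(4)]
  note proj = inst(4,5)[OF assms(6) y]
  have inj_snd: "inj_on snd (R x y)"
    using inj_on_snd_if_theta_rel_eq_Id_on[OF equalityD1[OF proj(1)] theta_Id] .
  have "inj_on fst (R x y)"
    by (rule inj_on_fst_if_inj_on_snd[OF inj_snd]) (use inst(1) y assms(8) in \<open>simp_all add: proj\<close>)
  then obtain h where bij: "bij_betw h (D x) (D y)" and graph: "R x y = {(a, h a) | a. a \<in> D x}"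
    using bij_graph_if_inj_on_fst_snd[OF _ inj_snd] unfolding proj by blast
  have "is_isomorphism A Rels (D x) (Op x) (D y) (Op y) h"
    using is_isomorphism_if_graph_subalg_product[OF bij] inst(3)[OF assms(6) y(1)] graph by simp
  with graph y show ?thesis unfolding iso_related_def by blast
qed

end
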